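(* Let $K:X\times X\to\mathbb{C}$ be positive definite and assume $\delta_x\in\mathscr{H}(K)$ for all $x\in X$. Let $F\subset X$ be a nonempty finite subset, $K_F=(K(x,y))_{x,y\in F}$, and let $\lambda$ be any eigenvalue of $K_F$. Then $1\le\lambda\sum_{x\in F}\|\delta_x\|^2_{\mathscr{H}(K)}$.
   Context: $\delta_x$ denotes the function on $X$ equal to $1$ at $x$ and $0$ elsewhere. $\mathscr{H}(K)$ is the reproducing kernel Hilbert space of $K$: the completion of the span of $\{K(\cdot,x)\}$ with $\langle K(\cdot,x),K(\cdot,y)\rangle=K(x,y)$, a space of functions on $X$ with $\langle K(\cdot,x),h\rangle=h(x)$. *)

theory Defs
  imports "HOL-Analysis.Analysis"
begin

text \<open>Positive definite kernel (in the sense of reproducing kernels: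
  all Gram forms are nonnegative reals).\<close>
definition pos_def_kernel :: "('a \<Rightarrow> 'a \<Rightarrow> complex) \<Rightarrow> bool" where
  "pos_def_kernel K \<longleftrightarrow>
     (\<forall>F (c :: 'a \<Rightarrow> complex). finite F \<longrightarrow>
        (let s = (\<Sum>x\<in>F. \<Sum>y\<in>F. cnj (c x) * c y * K x y) in Im s = 0 \<and> 0 \<le> Re s))"

definition csupp :: "('a \<Rightarrow> complex) \<Rightarrow> 'a set" where
  "csupp c = {y. c y \<noteq> 0}"

definition kfun :: "('a \<Rightarrow> 'a \<Rightarrow> complex) \<Rightarrow> ('a \<Rightarrow> complex) \<Rightarrow> 'a \<Rightarrow> complex" where
  "kfun K c = (\<lambda>z. \<Sum>y\<in>csupp c. c y * K z y)"

text \<open>Squared norm in the span: \<open>\<langle>h,h\<rangle>\<close> with \<open>\<langle>K(\<cdot>,x),K(\<cdot>,y)\<rangle> = K(x,y)\<close>.\<close>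
definition knorm2 :: "('a \<Rightarrow> 'a \<Rightarrow> complex) \<Rightarrow> ('a \<Rightarrow> complex) \<Rightarrow> real" where
  "knorm2 K c = Re (\<Sum>x\<in>csupp c. \<Sum>y\<in>csupp c. cnj (c x) * c y * K x y)"

text \<open>A sequence of span elements that is Cauchy in the span norm and converges
  pointwise to \<open>f\<close> (this is how the completion is realised as functions on X).\<close>
definition approx_seq :: "('a \<Rightarrow> 'a \<Rightarrow> complex) \<Rightarrow> (nat \<Rightarrow> 'a \<Rightarrow> complex) \<Rightarrow> ('a \<Rightarrow> complex) \<Rightarrow> bool" where
  "approx_seq K c f \<longleftrightarrow>
     (\<forall>n. finite (csupp (c n))) \<and>
     (\<forall>e>0. \<exists>N. \<forall>m\<ge>N. \<forall>n\<ge>N. knorm2 K (\<lambda>y. c m y - c n y) < e) \<and>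
     (\<forall>z. (\<lambda>n. kfun K (c n) z) \<longlonglongrightarrow> f z)"

definition in_rkhs :: "('a \<Rightarrow> 'a \<Rightarrow> complex) \<Rightarrow> ('a \<Rightarrow> complex) \<Rightarrow> bool" where
  "in_rkhs K f \<longleftrightarrow> (\<exists>c. approx_seq K c f)"

definition rkhs_norm2 :: "('a \<Rightarrow> 'a \<Rightarrow> complex) \<Rightarrow> ('a \<Rightarrow> complex) \<Rightarrow> real" where
  "rkhs_norm2 K f = (THE r. \<exists>c. approx_seq K c f \<and> (\<lambda>n. knorm2 K (c n)) \<longlonglongrightarrow> r)"

definition delta :: "'a \<Rightarrow> 'a \<Rightarrow> complex" where
  "delta x = (\<lambda>z. if z = x then 1 else 0)"

definition is_eigenvalue_on :: "('a \<Rightarrow> 'a \<Rightarrow> complex) \<Rightarrow> 'a set \<Rightarrow> complex \<Rightarrow> bool" where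
  "is_eigenvalue_on K F l \<longleftrightarrow>
     (\<exists>v :: 'a \<Rightarrow> complex. (\<exists>x\<in>F. v x \<noteq> 0) \<and> (\<forall>x\<in>F. (\<Sum>y\<in>F. K x y * v y) = l * v x))"

end

theory Submission
  imports Defs
begin

text \<open>If \<open>K\<^sub>F v = \<lambda> v\<close>, then \<open>h = \<Sum>\<^sub>x\<^sub>\<in>\<^sub>F v(x) K(\<cdot>,x)\<close> has \<open>\<parallel>h\<parallel>\<^sup>2 = \<langle>v, K\<^sub>F v\<rangle> = \<lambda> \<parallel>v\<parallel>\<^sup>2\<close>, so \<open>\<lambda>\<close> is real,
  and the reproducing property gives \<open>\<langle>h, \<delta>\<^sub>y\<rangle> = conj (v y)\<close> for \<open>y \<in> F\<close>. By Cauchy--Schwarz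
  \<open>\<bar>v y\<bar>\<^sup>2 \<le> \<lambda> \<parallel>v\<parallel>\<^sup>2 \<parallel>\<delta>\<^sub>y\<parallel>\<^sup>2\<close>; summing over \<open>y \<in> F\<close> and dividing by \<open>\<parallel>v\<parallel>\<^sup>2\<close> gives the claim.

  Since \<open>\<H>(K)\<close> is realised by norm-Cauchy sequences in the span that converge pointwise, the
  pairing with \<open>\<delta>\<^sub>y\<close> is a limit, and the real work is that the RKHS norm is well defined:
  the difference of two approximating sequences of the same function is norm-Cauchy and pointwise
  null, and such a sequence tends to \<open>0\<close> in norm.\<close>

section \<open>Gram forms of a positive definite kernel\<close>

text \<open>\<open>gram K S a b\<close> is the inner product of \<open>\<Sum> a x K(\<cdot>,x)\<close> and \<open>\<Sum> b y K(\<cdot>,y)\<close> when both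
  coefficient functions are supported in \<open>S\<close>.\<close>
definition gram :: "('a \<Rightarrow> 'a \<Rightarrow> complex) \<Rightarrow> 'a set \<Rightarrow> ('a \<Rightarrow> complex) \<Rightarrow> ('a \<Rightarrow> complex) \<Rightarrow> complex" where
  "gram K S a b = (\<Sum>x\<in>S. \<Sum>y\<in>S. cnj (a x) * b y * K x y)"

abbreviation knorm :: "('a \<Rightarrow> 'a \<Rightarrow> complex) \<Rightarrow> ('a \<Rightarrow> complex) \<Rightarrow> real" where
  "knorm K c \<equiv> sqrt (knorm2 K c)"

lemma pos_def_kernel_gram:
  assumes "pos_def_kernel K" "finite S"
  shows pos_def_kernel_gram_real: "Im (gram K S a a) = 0"
    and pos_def_kernel_gram_nonneg: "0 \<le> Re (gram K S a a)"
  using assms unfolding pos_def_kernel_def gram_def Let_def by auto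

lemma pos_def_kernel_hermitian:
  assumes pd: "pos_def_kernel K"
  shows "K y x = cnj (K x y)"
proof -
  have diag: "Im (K z z) = 0" for z
    using pos_def_kernel_gram_real[OF pd, of "{z}" "\<lambda>_. 1"] by (simp add: gram_def)
  show ?thesis
  proof (cases "x = y")
    case True
    then show ?thesis using diag by (simp add: complex_eq_iff)
  next
    case False
    have "Im (gram K {x, y} (\<lambda>_. 1) (\<lambda>_. 1)) = 0"
      by (rule pos_def_kernel_gram_real[OF pd]) simp
    then have im: "Im (K x y) + Im (K y x) = 0"
      using False diag by (simp add: gram_def)
    have "Im (gram K {x, y} (\<lambda>z. if z = x then 1 else \<i>) (\<lambda>z. if z = x then 1 else \<i>)) = 0"
      by (rule pos_def_kernel_gram_real[OF pd]) simp
    then have re: "Re (K x y) - Re (K y x) = 0"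
      using False diag by (simp add: gram_def)
    show ?thesis using im re by (simp add: complex_eq_iff)
  qed
qed

lemma gram_commute:
  assumes "pos_def_kernel K"
  shows "gram K S b a = cnj (gram K S a b)"
proof -
  have "gram K S b a = (\<Sum>y\<in>S. \<Sum>x\<in>S. cnj (b x) * a y * K x y)"
    unfolding gram_def by (rule sum.swap)
  also have "\<dots> = (\<Sum>y\<in>S. \<Sum>x\<in>S. cnj (cnj (a y) * b x * K y x))"
    by (intro sum.cong refl)
      (metis pos_def_kernel_hermitian[OF assms] complex_cnj_cnj complex_cnj_mult mult.commute mult.left_commute)
  also have "\<dots> = cnj (gram K S a b)"
    by (simp add: gram_def cnj_sum)
  finally show ?thesis .
qed

lemma gram_add_left: "gram K S (\<lambda>y. a y + b y) c = gram K S a c + gram K S b c"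
  unfolding gram_def by (simp add: distrib_right sum.distrib)

lemma gram_add_right: "gram K S a (\<lambda>y. b y + c y) = gram K S a b + gram K S a c"
  unfolding gram_def by (simp add: distrib_left distrib_right sum.distrib)

lemma gram_diff_scaled:
  "gram K S (\<lambda>x. a x - t * b x) (\<lambda>x. a x - t * b x) =
     gram K S a a - t * gram K S a b - cnj t * gram K S b a + t * cnj t * gram K S b b"
proof -
  have "cnj (a x - t * b x) * (a y - t * b y) * K x y =
     cnj (a x) * a y * K x y - t * (cnj (a x) * b y * K x y) - cnj t * (cnj (b x) * a y * K x y)
      + t * cnj t * (cnj (b x) * b y * K x y)" for x y
    by (simp only: complex_cnj_diff complex_cnj_mult) algebra
  then show ?thesis
    unfolding gram_def by (simp only: sum.distrib sum_subtractf flip: sum_distrib_left)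
qed

lemma gram_Cauchy_Schwarz:
  assumes pd: "pos_def_kernel K" and fin: "finite S"
  shows "(cmod (gram K S a b))\<^sup>2 \<le> Re (gram K S a a) * Re (gram K S b b)"
proof -
  define z A C where "z = gram K S a b" and "A = Re (gram K S a a)" and "C = Re (gram K S b b)"
  have A: "gram K S a a = of_real A" and C: "gram K S b b = of_real C"
    using pos_def_kernel_gram_real[OF pd fin] by (simp_all add: A_def C_def complex_eq_iff)
  have "0 \<le> A" "0 \<le> C"
    using pos_def_kernel_gram_nonneg[OF pd fin] by (simp_all add: A_def C_def)
  have quadratic: "0 \<le> A - 2 * Re (t * z) + (cmod t)\<^sup>2 * C" for t
  proof -
    have "0 \<le> Re (gram K S (\<lambda>x. a x - t * b x) (\<lambda>x. a x - t * b x))"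
      by (rule pos_def_kernel_gram_nonneg[OF pd fin])
    also have "\<dots> = Re (of_real A - t * z - cnj (t * z) + t * cnj t * of_real C)"
      unfolding gram_diff_scaled A C gram_commute[OF pd, of S b a] z_def by simp
    also have "t * cnj t = of_real ((cmod t)\<^sup>2)"
      by (rule complex_norm_square[symmetric])
    finally show ?thesis by simp
  qed
  show ?thesis
  proof (cases "C = 0")
    case True
    \<comment> \<open>The quadratic is then affine in \<open>t\<close>, so its linear coefficient must vanish.\<close>
    have "z = 0"
    proof (rule ccontr)
      assume "z \<noteq> 0"
      define s where "s = (A + 1) / (2 * (cmod z)\<^sup>2)"
      have "0 \<le> A - 2 * Re (of_real s * cnj z * z)"
        using quadratic[of "of_real s * cnj z"] True by simp
      also have "of_real s * cnj z * z = of_real (s * (cmod z)\<^sup>2)"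
        by (simp add: complex_norm_square[symmetric] mult.assoc mult.commute)
      also have "s * (cmod z)\<^sup>2 = (A + 1) / 2"
        using \<open>z \<noteq> 0\<close> by (simp add: s_def)
      finally show False by simp
    qed
    then show ?thesis using \<open>0 \<le> A\<close> \<open>0 \<le> C\<close> by (simp add: z_def A_def C_def)
  next
    case False
    then have "0 < C" using \<open>0 \<le> C\<close> by simp
    have "0 \<le> A - 2 * Re (cnj z / of_real C * z) + (cmod (cnj z / of_real C))\<^sup>2 * C"
      by (rule quadratic)
    also have "cnj z / of_real C * z = of_real ((cmod z)\<^sup>2 / C)"
      by (simp add: complex_norm_square[symmetric] mult.commute)
    also have "(cmod (cnj z / of_real C))\<^sup>2 * C = (cmod z)\<^sup>2 / C"
      using \<open>0 < C\<close> by (simp add: norm_divide power_divide power2_eq_square)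
    finally have "(cmod z)\<^sup>2 \<le> A * C"
      using \<open>0 < C\<close> by (simp add: divide_le_eq)
    then show ?thesis by (simp add: z_def A_def C_def)
  qed
qed

section \<open>The norm on the span of the kernel sections\<close>

lemma finite_csupp_diff:
  "finite (csupp a) \<Longrightarrow> finite (csupp b) \<Longrightarrow> finite (csupp (\<lambda>y. a y - b y))"
  by (rule finite_subset[of _ "csupp a \<union> csupp b"]) (auto simp: csupp_def)

lemma kfun_eq_sum:
  assumes "finite S" "csupp b \<subseteq> S"
  shows "kfun K b z = (\<Sum>y\<in>S. b y * K z y)"
  unfolding kfun_def
  by (rule sum.mono_neutral_left) (use assms in \<open>auto simp: csupp_def\<close>)

lemma kfun_diff:
  assumes "finite (csupp a)" "finite (csupp b)"
  shows "kfun K (\<lambda>y. a y - b y) z = kfun K a z - kfun K b z"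
proof -
  let ?S = "csupp a \<union> csupp b"
  have "kfun K c z = (\<Sum>y\<in>?S. c y * K z y)" if "csupp c \<subseteq> ?S" for c
    using kfun_eq_sum[OF _ that] assms by simp
  moreover have "csupp a \<subseteq> ?S" "csupp b \<subseteq> ?S" "csupp (\<lambda>y. a y - b y) \<subseteq> ?S"
    by (auto simp: csupp_def)
  ultimately show ?thesis
    by (simp add: sum_subtractf left_diff_distrib)
qed

lemma gram_eq_sum_kfun:
  assumes "finite S" "csupp b \<subseteq> S" "csupp a \<subseteq> T" "T \<subseteq> S"
  shows "gram K S a b = (\<Sum>x\<in>T. cnj (a x) * kfun K b x)"
proof -
  have "gram K S a b = (\<Sum>x\<in>S. cnj (a x) * kfun K b x)"
    unfolding gram_def kfun_eq_sum[OF assms(1,2)] by (simp add: sum_distrib_left mult.assoc)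
  also have "\<dots> = (\<Sum>x\<in>T. cnj (a x) * kfun K b x)"
    by (rule sum.mono_neutral_right) (use assms in \<open>auto simp: csupp_def\<close>)
  finally show ?thesis .
qed

lemma gram_mono_neutral:
  assumes "finite T" "S \<subseteq> T" "csupp a \<subseteq> S" "csupp b \<subseteq> S"
  shows "gram K T a b = gram K S a b"
proof -
  have "a x = 0" "b x = 0" if "x \<notin> S" for x
    using assms(3,4) that by (auto simp: csupp_def)
  then show ?thesis
    unfolding gram_def using assms(1,2)
    by (intro sum.mono_neutral_right sum.mono_neutral_cong_right) auto
qed

lemma knorm2_eq_gram:
  assumes "finite S" "csupp c \<subseteq> S"
  shows "knorm2 K c = Re (gram K S c c)"
  using gram_mono_neutral[OF assms(1,2) order_refl order_refl]
  by (simp add: knorm2_def gram_def)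

lemma knorm2_nonneg:
  assumes "pos_def_kernel K" "finite (csupp c)"
  shows "0 \<le> knorm2 K c"
  using knorm2_eq_gram[OF assms(2) order_refl] pos_def_kernel_gram_nonneg[OF assms] by simp

lemma knorm2_uminus: "knorm2 K (\<lambda>y. - c y) = knorm2 K c"
  by (simp add: knorm2_def csupp_def)

lemma norm_gram_le:
  assumes pd: "pos_def_kernel K" and "finite S" "csupp a \<subseteq> S" "csupp b \<subseteq> S"
  shows "cmod (gram K S a b) \<le> knorm K a * knorm K b"
proof -
  have "(cmod (gram K S a b))\<^sup>2 \<le> knorm2 K a * knorm2 K b"
    using gram_Cauchy_Schwarz[OF pd assms(2)] knorm2_eq_gram[OF assms(2,3)] knorm2_eq_gram[OF assms(2,4)]
    by simp
  then show ?thesis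
    by (metis norm_ge_zero real_sqrt_le_mono real_sqrt_mult real_sqrt_unique)
qed

lemma knorm_add_le:
  assumes pd: "pos_def_kernel K" and fin: "finite (csupp a)" "finite (csupp b)"
  shows "knorm K (\<lambda>y. a y + b y) \<le> knorm K a + knorm K b"
proof -
  let ?S = "csupp a \<union> csupp b"
  have S: "finite ?S" "csupp a \<subseteq> ?S" "csupp b \<subseteq> ?S" "csupp (\<lambda>y. a y + b y) \<subseteq> ?S"
    using fin by (auto simp: csupp_def)
  have "knorm2 K (\<lambda>y. a y + b y) = knorm2 K a + knorm2 K b + Re (gram K ?S a b) + Re (gram K ?S b a)"
    using knorm2_eq_gram[OF S(1)] S by (simp add: gram_add_left gram_add_right)
  also have "\<dots> \<le> knorm2 K a + knorm2 K b + 2 * (knorm K a * knorm K b)"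
    using complex_Re_le_cmod[of "gram K ?S a b"] complex_Re_le_cmod[of "gram K ?S b a"]
      norm_gram_le[OF pd S(1,2,3)] norm_gram_le[OF pd S(1,3,2)] mult.commute[of "knorm K a" "knorm K b"]
    by linarith
  also have "\<dots> = (knorm K a + knorm K b)\<^sup>2"
    using knorm2_nonneg[OF pd] fin by (simp add: power2_eq_square algebra_simps)
  finally show ?thesis
    using knorm2_nonneg[OF pd fin(1)] knorm2_nonneg[OF pd fin(2)] by (intro real_le_lsqrt) simp_all
qed

lemma knorm_diff_le:
  assumes "pos_def_kernel K" "finite (csupp a)" "finite (csupp b)"
  shows "knorm K (\<lambda>y. a y - b y) \<le> knorm K a + knorm K b"
  using knorm_add_le[OF assms(1,2), of "\<lambda>y. - b y"] assms(3)
  by (simp add: knorm2_uminus csupp_def)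

lemma knorm_diff_abs_le:
  assumes pd: "pos_def_kernel K" and fin: "finite (csupp a)" "finite (csupp b)"
  shows "\<bar>knorm K a - knorm K b\<bar> \<le> knorm K (\<lambda>y. a y - b y)"
proof -
  have reverse: "knorm K c \<le> knorm K d + knorm K (\<lambda>y. c y - d y)"
    if "finite (csupp c)" "finite (csupp d)" for c d
    using knorm_add_le[OF pd that(2) finite_csupp_diff[OF that]] by simp
  have "knorm2 K (\<lambda>y. b y - a y) = knorm2 K (\<lambda>y. a y - b y)"
    using knorm2_uminus[of K "\<lambda>y. a y - b y"] by simp
  then show ?thesis
    using reverse[OF fin] reverse[OF fin(2,1)] by (simp add: abs_le_iff)
qed

lemma knorm2_le_kfun_pairing:
  assumes pd: "pos_def_kernel K" and fin: "finite (csupp a)" "finite (csupp b)"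
  shows "knorm2 K b \<le> cmod (\<Sum>x\<in>csupp a. cnj (a x) * kfun K b x) + knorm K (\<lambda>y. b y - a y) * knorm K b"
proof -
  let ?S = "csupp a \<union> csupp b" and ?d = "\<lambda>y. b y - a y"
  have S: "finite ?S" "csupp a \<subseteq> ?S" "csupp b \<subseteq> ?S" "csupp ?d \<subseteq> ?S"
    using fin by (auto simp: csupp_def)
  have "gram K ?S b b = gram K ?S (\<lambda>y. a y + ?d y) b"
    by simp
  also have "\<dots> = (\<Sum>x\<in>csupp a. cnj (a x) * kfun K b x) + gram K ?S ?d b"
    unfolding gram_add_left gram_eq_sum_kfun[OF S(1,3) order_refl S(2)] ..
  finally have "knorm2 K b = Re (\<Sum>x\<in>csupp a. cnj (a x) * kfun K b x) + Re (gram K ?S ?d b)"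
    using knorm2_eq_gram[OF S(1,3)] by simp
  also have "\<dots> \<le> cmod (\<Sum>x\<in>csupp a. cnj (a x) * kfun K b x) + cmod (gram K ?S ?d b)"
    by (intro add_mono complex_Re_le_cmod)
  also have "\<dots> \<le> cmod (\<Sum>x\<in>csupp a. cnj (a x) * kfun K b x) + knorm K ?d * knorm K b"
    using norm_gram_le[OF pd S(1,4,3)] by simp
  finally show ?thesis .
qed

section \<open>Approximating sequences and the RKHS norm\<close>

lemma approx_seq_finite: "approx_seq K c f \<Longrightarrow> finite (csupp (c n))"
  by (simp add: approx_seq_def)

lemma approx_seq_pointwise: "approx_seq K c f \<Longrightarrow> (\<lambda>n. kfun K (c n) z) \<longlonglongrightarrow> f z"
  by (simp add: approx_seq_def)

lemma approx_seq_Cauchy: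
  assumes "approx_seq K c f" "0 < e"
  shows "\<exists>N. \<forall>m\<ge>N. \<forall>n\<ge>N. knorm K (\<lambda>y. c m y - c n y) < e"
proof -
  obtain N where "\<forall>m\<ge>N. \<forall>n\<ge>N. knorm2 K (\<lambda>y. c m y - c n y) < e\<^sup>2"
    using assms unfolding approx_seq_def by (meson zero_less_power)
  then have "\<forall>m\<ge>N. \<forall>n\<ge>N. knorm K (\<lambda>y. c m y - c n y) < e"
    using \<open>0 < e\<close> by (metis less_eq_real_def real_sqrt_less_mono real_sqrt_pow2_iff real_sqrt_power)
  then show ?thesis ..
qed

lemma approx_seq_knorm_convergent:
  assumes pd: "pos_def_kernel K" and ap: "approx_seq K c f"
  shows "convergent (\<lambda>n. knorm K (c n))"
proof -
  have "Cauchy (\<lambda>n. knorm K (c n))"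
  proof (rule CauchyI)
    fix e :: real
    assume "0 < e"
    then obtain N where N: "\<forall>m\<ge>N. \<forall>n\<ge>N. knorm K (\<lambda>y. c m y - c n y) < e"
      using approx_seq_Cauchy[OF ap] by blast
    have "norm (knorm K (c m) - knorm K (c n)) < e" if "N \<le> m" "N \<le> n" for m n
    proof -
      have "knorm K (\<lambda>y. c m y - c n y) < e"
        using N that by blast
      then show ?thesis
        using knorm_diff_abs_le[OF pd approx_seq_finite[OF ap] approx_seq_finite[OF ap], of m n] by simp
    qed
    then show "\<exists>M. \<forall>m\<ge>M. \<forall>n\<ge>M. norm (knorm K (c m) - knorm K (c n)) < e"
      by blast
  qed
  then show ?thesis
    by (simp add: Cauchy_convergent_iff)
qed

lemma approx_seq_diff_zero:
  assumes pd: "pos_def_kernel K" and apc: "approx_seq K c f" and apd: "approx_seq K d f"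
  shows "approx_seq K (\<lambda>n y. c n y - d n y) (\<lambda>_. 0)"
  unfolding approx_seq_def
proof (intro conjI allI impI)
  fix n
  show "finite (csupp (\<lambda>y. c n y - d n y))"
    by (intro finite_csupp_diff approx_seq_finite[OF apc] approx_seq_finite[OF apd])
next
  fix z
  have "(\<lambda>n. kfun K (c n) z - kfun K (d n) z) \<longlonglongrightarrow> f z - f z"
    by (intro tendsto_diff approx_seq_pointwise[OF apc] approx_seq_pointwise[OF apd])
  then show "(\<lambda>n. kfun K (\<lambda>y. c n y - d n y) z) \<longlonglongrightarrow> 0"
    by (simp add: kfun_diff approx_seq_finite[OF apc] approx_seq_finite[OF apd])
next
  fix r :: real
  assume "0 < r"
  obtain N1 where N1: "\<forall>m\<ge>N1. \<forall>n\<ge>N1. knorm K (\<lambda>y. c m y - c n y) < sqrt r / 2"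
    using approx_seq_Cauchy[OF apc, of "sqrt r / 2"] \<open>0 < r\<close> by auto
  obtain N2 where N2: "\<forall>m\<ge>N2. \<forall>n\<ge>N2. knorm K (\<lambda>y. d m y - d n y) < sqrt r / 2"
    using approx_seq_Cauchy[OF apd, of "sqrt r / 2"] \<open>0 < r\<close> by auto
  have "knorm2 K (\<lambda>y. (c m y - d m y) - (c n y - d n y)) < r" if "max N1 N2 \<le> m" "max N1 N2 \<le> n" for m n
  proof -
    have "(\<lambda>y. (c m y - d m y) - (c n y - d n y)) = (\<lambda>y. (c m y - c n y) - (d m y - d n y))"
      by (simp add: algebra_simps)
    then have "knorm K (\<lambda>y. (c m y - d m y) - (c n y - d n y))
        \<le> knorm K (\<lambda>y. c m y - c n y) + knorm K (\<lambda>y. d m y - d n y)"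
      using knorm_diff_le[OF pd] finite_csupp_diff approx_seq_finite[OF apc] approx_seq_finite[OF apd]
      by metis
    also have "\<dots> < sqrt r"
      using N1 N2 that by fastforce
    finally show ?thesis
      by (simp add: real_sqrt_less_iff)
  qed
  then show "\<exists>N. \<forall>m\<ge>N. \<forall>n\<ge>N. knorm2 K (\<lambda>y. (c m y - d m y) - (c n y - d n y)) < r"
    by blast
qed

lemma approx_seq_zero_knorm_tendsto:
  assumes pd: "pos_def_kernel K" and ap: "approx_seq K e (\<lambda>_. 0)"
  shows "(\<lambda>n. knorm K (e n)) \<longlonglongrightarrow> 0"
proof -
  note fin = approx_seq_finite[OF ap]
  obtain \<rho> where \<rho>: "(\<lambda>n. knorm K (e n)) \<longlonglongrightarrow> \<rho>"
    using approx_seq_knorm_convergent[OF pd ap] by (auto simp: convergent_def)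
  have "0 \<le> \<rho>"
    using \<rho> by (rule LIMSEQ_le_const) (simp add: knorm2_nonneg[OF pd fin])
  \<comment> \<open>For \<open>n \<ge> N\<close>, \<open>\<parallel>e n\<parallel>\<^sup>2 \<le> \<bar>\<langle>e N, e n\<rangle>\<bar> + \<epsilon> \<parallel>e n\<parallel>\<close>, and the pairing with the fixed \<open>e N\<close> tends to \<open>0\<close> pointwise.\<close>
  have small: "\<rho>\<^sup>2 \<le> \<epsilon> * \<rho>" if "0 < \<epsilon>" for \<epsilon>
  proof -
    obtain N where N: "\<forall>m\<ge>N. \<forall>n\<ge>N. knorm K (\<lambda>y. e m y - e n y) < \<epsilon>"
      using approx_seq_Cauchy[OF ap \<open>0 < \<epsilon>\<close>] by blast
    define g where "g n = (\<Sum>x\<in>csupp (e N). cnj (e N x) * kfun K (e n) x)" for n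
    have "g \<longlonglongrightarrow> (\<Sum>x\<in>csupp (e N). cnj (e N x) * 0)"
      unfolding g_def by (intro tendsto_sum tendsto_mult_left approx_seq_pointwise[OF ap])
    then have "(\<lambda>n. cmod (g n) + \<epsilon> * knorm K (e n)) \<longlonglongrightarrow> 0 + \<epsilon> * \<rho>"
      by (intro tendsto_add tendsto_mult_left \<rho>) (simp add: tendsto_norm_zero)
    moreover have "(\<lambda>n. (knorm K (e n))\<^sup>2) \<longlonglongrightarrow> \<rho>\<^sup>2"
      by (intro tendsto_power \<rho>)
    moreover have "(knorm K (e n))\<^sup>2 \<le> cmod (g n) + \<epsilon> * knorm K (e n)" if "N \<le> n" for n
    proof -
      have "(knorm K (e n))\<^sup>2 \<le> cmod (g n) + knorm K (\<lambda>y. e n y - e N y) * knorm K (e n)"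
        using knorm2_le_kfun_pairing[OF pd fin fin] knorm2_nonneg[OF pd fin] by (simp add: g_def)
      also have "\<dots> \<le> cmod (g n) + \<epsilon> * knorm K (e n)"
        using N that knorm2_nonneg[OF pd fin] by (intro add_left_mono mult_right_mono) (auto simp: less_imp_le)
      finally show ?thesis .
    qed
    ultimately show ?thesis
      by (intro LIMSEQ_le) auto
  qed
  have "\<rho> = 0"
  proof (rule ccontr)
    assume "\<rho> \<noteq> 0"
    then show False
      using small[of "\<rho> / 2"] \<open>0 \<le> \<rho>\<close> by (simp add: power2_eq_square)
  qed
  then show ?thesis
    using \<rho> by simp
qed

lemma approx_seq_knorm_diff_tendsto:
  assumes pd: "pos_def_kernel K" and apc: "approx_seq K c f" and apd: "approx_seq K d f"
  shows "(\<lambda>n. knorm K (c n) - knorm K (d n)) \<longlonglongrightarrow> 0"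
proof (rule Lim_null_comparison)
  show "(\<lambda>n. knorm K (\<lambda>y. c n y - d n y)) \<longlonglongrightarrow> 0"
    by (rule approx_seq_zero_knorm_tendsto[OF pd approx_seq_diff_zero[OF pd apc apd]])
  show "\<forall>\<^sub>F n in sequentially. norm (knorm K (c n) - knorm K (d n)) \<le> knorm K (\<lambda>y. c n y - d n y)"
    using knorm_diff_abs_le[OF pd approx_seq_finite[OF apc] approx_seq_finite[OF apd]] by simp
qed

lemma rkhs_norm2_tendsto:
  assumes pd: "pos_def_kernel K" and ap: "approx_seq K c f"
  shows "(\<lambda>n. knorm2 K (c n)) \<longlonglongrightarrow> rkhs_norm2 K f"
proof -
  have sq: "(knorm K (d n))\<^sup>2 = knorm2 K (d n)" if "approx_seq K d f" for d n
    using knorm2_nonneg[OF pd approx_seq_finite[OF that]] by simp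
  obtain \<rho> where \<rho>: "(\<lambda>n. knorm K (c n)) \<longlonglongrightarrow> \<rho>"
    using approx_seq_knorm_convergent[OF pd ap] by (auto simp: convergent_def)
  have lim: "(\<lambda>n. knorm2 K (c n)) \<longlonglongrightarrow> \<rho>\<^sup>2"
    using tendsto_power[OF \<rho>, of 2] by (simp add: sq[OF ap])
  have "rkhs_norm2 K f = \<rho>\<^sup>2"
    unfolding rkhs_norm2_def
  proof (rule the_equality)
    show "\<exists>c. approx_seq K c f \<and> (\<lambda>n. knorm2 K (c n)) \<longlonglongrightarrow> \<rho>\<^sup>2"
      using ap lim by blast
  next
    fix s
    assume "\<exists>d. approx_seq K d f \<and> (\<lambda>n. knorm2 K (d n)) \<longlonglongrightarrow> s"
    then obtain d where apd: "approx_seq K d f" and s: "(\<lambda>n. knorm2 K (d n)) \<longlonglongrightarrow> s"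
      by blast
    have "(\<lambda>n. knorm K (c n) - (knorm K (c n) - knorm K (d n))) \<longlonglongrightarrow> \<rho> - 0"
      by (intro tendsto_diff \<rho> approx_seq_knorm_diff_tendsto[OF pd ap apd])
    then have "(\<lambda>n. (knorm K (d n))\<^sup>2) \<longlonglongrightarrow> \<rho>\<^sup>2"
      by (intro tendsto_power) simp
    then have "(\<lambda>n. knorm2 K (d n)) \<longlonglongrightarrow> \<rho>\<^sup>2"
      by (simp add: sq[OF apd])
    then show "s = \<rho>\<^sup>2"
      using s LIMSEQ_unique by blast
  qed
  then show ?thesis
    using lim by simp
qed

lemma norm_pairing_le_rkhs_norm2:
  assumes pd: "pos_def_kernel K" and "in_rkhs K f" and fF: "finite F"
  shows "(cmod (\<Sum>x\<in>F. cnj (w x) * f x))\<^sup>2 \<le> Re (gram K F w w) * rkhs_norm2 K f"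
proof -
  obtain c where ap: "approx_seq K c f"
    using \<open>in_rkhs K f\<close> unfolding in_rkhs_def by blast
  define u where "u x = (if x \<in> F then w x else 0)" for x
  have u: "csupp u \<subseteq> F"
    by (auto simp: u_def csupp_def)
  have "knorm2 K u = Re (gram K F w w)"
    unfolding knorm2_eq_gram[OF fF u] by (simp add: gram_def u_def)
  then have knorm2_u: "knorm2 K u * knorm2 K (c n) = (knorm K u * knorm K (c n))\<^sup>2" for n
    using knorm2_nonneg[OF pd approx_seq_finite[OF ap]] pos_def_kernel_gram_nonneg[OF pd fF, of w]
    by (simp add: power_mult_distrib)
  define X where "X n = (\<Sum>x\<in>F. cnj (w x) * kfun K (c n) x)" for n
  have "X \<longlonglongrightarrow> (\<Sum>x\<in>F. cnj (w x) * f x)"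
    unfolding X_def by (intro tendsto_sum tendsto_mult_left approx_seq_pointwise[OF ap])
  then have "(\<lambda>n. (cmod (X n))\<^sup>2) \<longlonglongrightarrow> (cmod (\<Sum>x\<in>F. cnj (w x) * f x))\<^sup>2"
    by (intro tendsto_power tendsto_norm)
  moreover have "(\<lambda>n. knorm2 K u * knorm2 K (c n)) \<longlonglongrightarrow> knorm2 K u * rkhs_norm2 K f"
    by (intro tendsto_mult_left rkhs_norm2_tendsto[OF pd ap])
  moreover have "(cmod (X n))\<^sup>2 \<le> knorm2 K u * knorm2 K (c n)" for n
  proof -
    let ?S = "F \<union> csupp (c n)"
    have S: "finite ?S" "csupp (c n) \<subseteq> ?S" "F \<subseteq> ?S"
      using fF approx_seq_finite[OF ap] by auto
    have "X n = gram K ?S u (c n)"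
      unfolding gram_eq_sum_kfun[OF S(1,2) u S(3)] X_def by (simp add: u_def)
    then have "cmod (X n) \<le> knorm K u * knorm K (c n)"
      using norm_gram_le[OF pd S(1)] u S by auto
    then show ?thesis
      unfolding knorm2_u by (simp add: power_mono)
  qed
  ultimately have "(cmod (\<Sum>x\<in>F. cnj (w x) * f x))\<^sup>2 \<le> knorm2 K u * rkhs_norm2 K f"
    by (intro LIMSEQ_le) auto
  then show ?thesis
    using \<open>knorm2 K u = Re (gram K F w w)\<close> by simp
qed

section \<open>Eigenvalues of kernel matrices\<close>

lemma gram_eigenvector:
  assumes "\<forall>x\<in>F. (\<Sum>y\<in>F. K x y * v y) = l * v x"
  shows "gram K F v v = l * (\<Sum>x\<in>F. (cmod (v x))\<^sup>2)"
proof -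
  have "gram K F v v = (\<Sum>x\<in>F. cnj (v x) * (\<Sum>y\<in>F. K x y * v y))"
    unfolding gram_def by (simp add: sum_distrib_left mult_ac)
  also have "\<dots> = (\<Sum>x\<in>F. l * (v x * cnj (v x)))"
    using assms by (simp add: mult_ac)
  also have "\<dots> = l * (\<Sum>x\<in>F. (cmod (v x))\<^sup>2)"
    by (simp add: sum_distrib_left complex_norm_square[symmetric])
  finally show ?thesis .
qed

theorem lemma8p1:
  fixes K :: "'a \<Rightarrow> 'a \<Rightarrow> complex" and F :: "'a set" and l :: complex
  assumes "pos_def_kernel K"
    and "\<And>x. in_rkhs K (delta x)"
    and "finite F" and "F \<noteq> {}"
    and "is_eigenvalue_on K F l"
  shows "Im l = 0 \<and> 1 \<le> Re l * (\<Sum>x\<in>F. rkhs_norm2 K (delta x))"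
proof -
  note pd = assms(1) and fF = assms(3)
  obtain v where "\<exists>x\<in>F. v x \<noteq> 0" and eigen: "\<forall>x\<in>F. (\<Sum>y\<in>F. K x y * v y) = l * v x"
    using assms(5) unfolding is_eigenvalue_on_def by blast
  define Q where "Q = (\<Sum>x\<in>F. (cmod (v x))\<^sup>2)"
  have "0 < Q"
  proof -
    obtain x0 where "x0 \<in> F" "v x0 \<noteq> 0"
      using \<open>\<exists>x\<in>F. v x \<noteq> 0\<close> by blast
    then show ?thesis
      unfolding Q_def by (intro sum_pos2[OF fF, of x0]) auto
  qed
  have gram: "gram K F v v = l * of_real Q"
    unfolding Q_def by (rule gram_eigenvector[OF eigen])
  then have "Im l = 0"
    using pos_def_kernel_gram_real[OF pd fF, of v] \<open>0 < Q\<close> by simp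
  have Re_gram: "Re (gram K F v v) = Re l * Q"
    using gram \<open>Im l = 0\<close> by simp
  have "(cmod (v y))\<^sup>2 \<le> Re l * Q * rkhs_norm2 K (delta y)" if "y \<in> F" for y
  proof -
    have "(\<Sum>x\<in>F. cnj (v x) * delta y x) = cnj (v y)"
      using that fF by (simp add: delta_def sum.remove[of F y])
    then show ?thesis
      using norm_pairing_le_rkhs_norm2[OF pd assms(2) fF, of v y] by (simp add: Re_gram)
  qed
  then have "Q \<le> (\<Sum>y\<in>F. Re l * Q * rkhs_norm2 K (delta y))"
    unfolding Q_def by (rule sum_mono)
  also have "\<dots> = Q * (Re l * (\<Sum>x\<in>F. rkhs_norm2 K (delta x)))"
    by (simp add: sum_distrib_left mult_ac)
  finally have "Q * 1 \<le> Q * (Re l * (\<Sum>x\<in>F. rkhs_norm2 K (delta x)))"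
    by simp
  then show ?thesis
    using \<open>0 < Q\<close> \<open>Im l = 0\<close> by simp
qed

end
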